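(* For $n>0$, $a(n)=n$ if and only if the Fibonacci representation $(n)_F$ belongs to the regular language $1\,(00100^*1)^*\,\{\epsilon,\,01,\,010,\,0100\}$.
   Context: Let $(F_n)_{n\ge 0}$ be the Fibonacci numbers: $F_0=0$, $F_1=1$, $F_n=F_{n-1}+F_{n-2}$ for $n\ge 2$. Define $(a(n))_{n\ge 0}$ (OEIS A105774) by $a(0)=0$, $a(1)=1$, and for $n\ge 2$, $a(n)=F_{j+1}-a(n-F_j)$, where $j\ge 2$ is the unique index with $F_j<n\le F_{j+1}$. The Fibonacci (Zeckendorf) representation $(n)_F$ of $n\ge1$ is the unique binary string $e_1\cdots e_t$ with $e_1=1$, no two consecutive $1$'s, and $n=\sum_{i=1}^t e_iF_{t-i+2}$. In the regular expression, juxtaposition is concatenation, $\epsilon$ is the empty string, $w^*$ denotes zero or more repetitions of $w$, and the star applies to the immediately preceding symbol or parenthesized group (so $00100^*1$ denotes the strings $0010\,0^k\,1$, $k\ge 0$); a set of strings in braces denotes a choice of one of them. *)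

theory Defs
  imports "HOL-Number_Theory.Fib"
begin

(* F_n is the library's fib: fib 0 = 0, fib 1 = 1, fib (n+2) = fib (n+1) + fib n *)

lemma fib_ge_self: "n \<le> fib (n + 2)"
proof (induction n)
  case 0 then show ?case by simp
next
  case (Suc n)
  have "fib (Suc n + 2) = fib (n + 2) + fib (n + 1)"
    using fib_plus_2[of "n+1"] by simp
  moreover have "fib (n + 1) \<ge> 1" using fib_neq_0_nat[of "n+1"] by simp
  ultimately show ?case using Suc by simp
qed

lemma fib_index_exists_unique:
  assumes "2 \<le> n"
  shows "\<exists>!j. 2 \<le> j \<and> fib j < n \<and> n \<le> fib (j + 1)"
proof -
  define j where "j = (LEAST j. n \<le> fib (Suc j))"
  have ex: "n \<le> fib (Suc (Suc n))" using fib_ge_self[of n] by simp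
  have jP: "n \<le> fib (Suc j)" unfolding j_def by (rule LeastI[where P="\<lambda>j. n \<le> fib (Suc j)", OF ex])
  have j2: "2 \<le> j"
  proof (rule ccontr)
    assume "\<not> 2 \<le> j"
    then have "j = 0 \<or> j = 1" by auto
    then show False using jP assms by (auto simp: numeral_2_eq_2)
  qed
  have "\<not> n \<le> fib (Suc (j - 1))"
    unfolding j_def by (rule not_less_Least) (use j2 j_def in auto)
  then have "fib j < n" using j2 by (simp add: Suc_diff_1)
  then have P: "2 \<le> j \<and> fib j < n \<and> n \<le> fib (j + 1)" using j2 jP by simp
  show ?thesis
  proof (rule ex1I[of _ j])
    show "2 \<le> j \<and> fib j < n \<and> n \<le> fib (j + 1)" by (rule P)
  next
    fix k assume k: "2 \<le> k \<and> fib k < n \<and> n \<le> fib (k + 1)"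
    show "k = j"
    proof (rule ccontr)
      assume "k \<noteq> j"
      then have "k + 1 \<le> j \<or> j + 1 \<le> k" by auto
      then show False
        using fib_mono[of "k+1" j] fib_mono[of "j+1" k] P k by auto
    qed
  qed
qed

definition fib_index :: "nat \<Rightarrow> nat" where
  "fib_index n = (THE j. 2 \<le> j \<and> fib j < n \<and> n \<le> fib (j + 1))"

lemma fib_index_prop:
  assumes "2 \<le> n"
  shows "2 \<le> fib_index n \<and> fib (fib_index n) < n \<and> n \<le> fib (fib_index n + 1)"
  unfolding fib_index_def using theI'[OF fib_index_exists_unique[OF assms]] .

(* OEIS A105774; values taken in int so that the subtraction is genuine *)
function A105774 :: "nat \<Rightarrow> int" where
  "A105774 n = (if n = 0 then 0 else if n = 1 then 1
     else int (fib (fib_index n + 1)) - A105774 (n - fib (fib_index n)))"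
  by auto
termination
proof (relation "measure id")
  show "wf (measure id)" by simp
next
  fix n :: nat assume "\<not> n = 0" "\<not> n = 1"
  then have n2: "2 \<le> n" by auto
  then have "2 \<le> fib_index n" using fib_index_prop by blast
  then have "0 < fib (fib_index n)" by (intro fib_neq_0_nat) simp
  then show "(n - fib (fib_index n), n) \<in> measure id" using n2 by simp
qed

declare A105774.simps [simp del]

definition fib_value :: "nat list \<Rightarrow> nat" where
  "fib_value w = (\<Sum>i<length w. w ! i * fib (length w - i + 1))"

definition is_zeck_rep :: "nat list \<Rightarrow> bool" where
  "is_zeck_rep w \<longleftrightarrow> w \<noteq> [] \<and> hd w = 1 \<and> set w \<subseteq> {0, 1} \<and>
     (\<forall>i. i + 1 < length w \<longrightarrow> \<not> (w ! i = 1 \<and> w ! (i + 1) = 1))"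

definition zeck :: "nat \<Rightarrow> nat list" where
  "zeck n = (THE w. is_zeck_rep w \<and> fib_value w = n)"

definition lang21 :: "nat list set" where
  "lang21 = {[1] @ concat ws @ s | ws s.
      (\<forall>w \<in> set ws. \<exists>k. w = [0,0,1,0] @ replicate k 0 @ [1]) \<and>
      s \<in> {[], [0,1], [0,1,0], [0,1,0,0]}}"

end

theory Submission
  imports Defs
begin

text \<open>Write \<open>n = F(j+2) + m\<close> with \<open>0 < m \<le> F(j+1)\<close>. The recursion reads
  \<open>a(n) = F(j+3) - a(m)\<close>, so \<open>a(n) = n\<close> iff \<open>a(m) + m = F(j+1)\<close>. As \<open>0 < a(m) \<le> F(k)\<close>
  whenever \<open>m \<le> F(k)\<close>, unfolding the recursion once more for \<open>m = F(i+2) + p\<close> shows that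
  this happens iff \<open>j = i + 3\<close> and \<open>a(p) = p\<close>. Since \<open>a(F(k)) < F(k)\<close> for \<open>k \<ge> 3\<close>, the
  fixed points are \<open>1, 4, 7, 11\<close> and the numbers \<open>F(i+5) + F(i+2) + p\<close> with
  \<open>0 < p < F(i+1)\<close> and \<open>a(p) = p\<close>. The Zeckendorf representations of the latter are exactly
  the words \<open>1001 0\<^sup>k (p)\<^sub>F\<close> with \<open>k \<ge> 1\<close>, which is also the recursive description of the
  language, so the theorem follows by induction on \<open>n\<close>.\<close>

section \<open>Fixed points of the recursion\<close>

lemma fib_less_fib_imp_less: "fib m < fib n \<Longrightarrow> m < n"
  using fib_mono[of n m] by (cases "n \<le> m") auto

lemma less_fib_add_2: "n < fib (n + 2)"
proof (induction n)
  case (Suc n)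
  have "0 < fib (n + 1)" by (simp add: fib_neq_0_nat)
  then show ?case using Suc fib_plus_2[of "n + 1"] by simp
qed simp

lemma fib_index_eqI:
  assumes "2 \<le> j" "fib j < n" "n \<le> fib (j + 1)"
  shows "fib_index n = j"
proof -
  have "2 \<le> n" using assms fib_neq_0_nat[of j] by simp
  then show ?thesis unfolding fib_index_def
    by (rule the1_equality[OF fib_index_exists_unique]) (use assms in auto)
qed

lemma fib_add_decomposition:
  assumes "2 \<le> n"
  obtains i p where "0 < p" "p \<le> fib (i + 1)" "n = fib (i + 2) + p"
proof -
  obtain j where j: "2 \<le> j" "fib j < n" "n \<le> fib (j + 1)"
    using fib_index_prop[OF assms] by blast
  then obtain i where i: "j = i + 2" by (metis add.commute le_iff_add)
  show thesis
    by (rule that[of "n - fib j" i]) (use j i fib_plus_2[of "i + 1"] in auto)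
qed

lemma A105774_1 [simp]: "A105774 1 = 1" "A105774 (Suc 0) = 1"
  by (simp_all add: A105774.simps)

lemma A105774_fib_add:
  assumes "0 < p" "p \<le> fib (i + 1)"
  shows "A105774 (fib (i + 2) + p) = int (fib (i + 3)) - A105774 p"
proof -
  have "fib (i + 3) = fib (i + 2) + fib (i + 1)" by (simp add: eval_nat_numeral)
  then have "fib_index (fib (i + 2) + p) = i + 2"
    using assms by (intro fib_index_eqI) simp_all
  moreover have "2 \<le> fib (i + 2) + p" using assms fib_neq_0_nat[of "i + 2"] by simp
  ultimately show ?thesis
    by (subst A105774.simps) (simp add: numeral_3_eq_3)
qed

lemma A105774_bounds:
  assumes "0 < m"
  shows "0 < A105774 m \<and> (m \<le> fib k \<longrightarrow> A105774 m \<le> int (fib k))"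
  using assms
proof (induction m arbitrary: k rule: less_induct)
  case (less m)
  show ?case
  proof (cases "m = 1")
    case False
    then have "2 \<le> m" using less.prems by simp
    then obtain i p where p: "0 < p" "p \<le> fib (i + 1)" and m: "m = fib (i + 2) + p"
      by (rule fib_add_decomposition)
    have "p < m" using m fib_neq_0_nat[of "i + 2"] by simp
    then have IH: "0 < A105774 p" "A105774 p \<le> int (fib (i + 1))"
      using less.IH[of p "i + 1"] p by simp_all
    have A: "A105774 m = int (fib (i + 3)) - A105774 p"
      using A105774_fib_add[OF p] m by simp
    have fib3: "fib (i + 3) = fib (i + 2) + fib (i + 1)" by (simp add: eval_nat_numeral)
    have "A105774 m \<le> int (fib k)" if "m \<le> fib k"
    proof -
      have "i + 2 < k" using fib_less_fib_imp_less[of "i + 2" k] that m p by simp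
      then have "fib (i + 3) \<le> fib k" using fib_mono by simp
      then show ?thesis using A IH by simp
    qed
    then show ?thesis using A IH fib3 fib_neq_0_nat[of "i + 2"] by auto
  qed (auto simp: A105774.simps)
qed

lemma A105774_pos: "0 < m \<Longrightarrow> 0 < A105774 m"
  using A105774_bounds by blast

lemma A105774_le_fib: "0 < m \<Longrightarrow> m \<le> fib k \<Longrightarrow> A105774 m \<le> int (fib k)"
  using A105774_bounds by blast

lemma A105774_fib_less: "A105774 (fib (k + 3)) < int (fib (k + 3))"
proof -
  have "fib (k + 3) = fib (k + 2) + fib (k + 1)" by (simp add: eval_nat_numeral)
  moreover have "0 < fib (k + 1)" by (simp add: fib_neq_0_nat)
  ultimately show ?thesis
    using A105774_fib_add[of "fib (k + 1)" k] A105774_pos[of "fib (k + 1)"] by simp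
qed

lemma A105774_add_self_eq_fib_iff:
  assumes p: "0 < p" "p \<le> fib (i + 1)" and m: "m = fib (i + 2) + p" and "m \<le> fib k"
  shows "A105774 m + int m = int (fib k) \<longleftrightarrow> k = i + 4 \<and> A105774 p = int p"
proof -
  have A: "A105774 m + int m = int (fib (i + 4)) + int p - A105774 p"
    using A105774_fib_add[OF p] m by (simp add: eval_nat_numeral)
  have bounds: "0 < A105774 p" "A105774 p \<le> int (fib (i + 1))"
    using A105774_pos A105774_le_fib p by auto
  have "i + 2 < k" using fib_less_fib_imp_less[of "i + 2" k] assms by simp
  then consider "k = i + 3" | "k = i + 4" | "i + 5 \<le> k" by linarith
  then show ?thesis
  proof cases
    case 1
    then show ?thesis using A bounds p by (simp add: eval_nat_numeral)
  next
    case 2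
    then show ?thesis using A by auto
  next
    case 3
    then have "fib (i + 5) \<le> fib k" using fib_mono by simp
    then show ?thesis using A bounds p 3 by (simp add: eval_nat_numeral)
  qed
qed

lemma A105774_fixed_iff_add_self:
  assumes "0 < m" "m \<le> fib (j + 1)"
  shows "A105774 (fib (j + 2) + m) = int (fib (j + 2) + m) \<longleftrightarrow>
    A105774 m + int m = int (fib (j + 1))"
proof -
  have "fib (j + 3) = fib (j + 2) + fib (j + 1)" by (simp add: eval_nat_numeral)
  then show ?thesis using A105774_fib_add[OF assms] by (auto simp del: fib.simps)
qed

lemma A105774_fixed_extend:
  assumes p: "0 < p" "p \<le> fib (i + 1)" and fixed: "A105774 p = int p"
  shows "A105774 (fib (i + 5) + fib (i + 2) + p) = int (fib (i + 5) + fib (i + 2) + p)"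
proof -
  define m where "m = fib (i + 2) + p"
  have n: "fib (i + 5) + fib (i + 2) + p = fib (i + 3 + 2) + m"
    unfolding m_def by (simp add: add.assoc add.commute del: fib.simps)
  have m: "0 < m" "m \<le> fib (i + 3 + 1)"
    using p unfolding m_def by (simp_all add: eval_nat_numeral)
  have "A105774 m + int m = int (fib (i + 3 + 1))"
    using A105774_add_self_eq_fib_iff[OF p m_def m(2)] fixed by simp
  then show ?thesis
    unfolding n by (rule A105774_fixed_iff_add_self[OF m, THEN iffD2])
qed

lemma A105774_4: "A105774 4 = 4"
proof -
  have "A105774 (fib (2 + 2) + 1) = int (fib (2 + 2) + 1)"
    by (subst A105774_fixed_iff_add_self) (simp_all add: eval_nat_numeral)
  then show ?thesis by (simp add: eval_nat_numeral)
qed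

lemma A105774_fixed_iff_decomposition:
  assumes "2 \<le> n"
  shows "A105774 n = int n \<longleftrightarrow> n = 4 \<or>
    (\<exists>i p. 0 < p \<and> p \<le> fib (i + 1) \<and> n = fib (i + 5) + fib (i + 2) + p \<and> A105774 p = int p)"
proof
  assume fixed: "A105774 n = int n"
  obtain j m where m: "0 < m" "m \<le> fib (j + 1)" and n: "n = fib (j + 2) + m"
    using fib_add_decomposition[OF assms] .
  have sum: "A105774 m + int m = int (fib (j + 1))"
    using A105774_fixed_iff_add_self[OF m] fixed n by simp
  show "n = 4 \<or>
    (\<exists>i p. 0 < p \<and> p \<le> fib (i + 1) \<and> n = fib (i + 5) + fib (i + 2) + p \<and> A105774 p = int p)"
  proof (cases "m = 1")
    case True
    then have "fib (j + 1) = 2" using sum unfolding True A105774_1 by simp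
    then have "j = 2"
      using fib_less_fib_imp_less[of 2 "j + 1"] fib_less_fib_imp_less[of "j + 1" 4]
      by (simp add: eval_nat_numeral)
    then show ?thesis using n True by (simp add: eval_nat_numeral)
  next
    case False
    then have "2 \<le> m" using m by simp
    then obtain i p where p: "0 < p" "p \<le> fib (i + 1)" and m': "m = fib (i + 2) + p"
      by (rule fib_add_decomposition)
    have "j + 1 = i + 4" "A105774 p = int p"
      using A105774_add_self_eq_fib_iff[OF p m' m(2)] sum by simp_all
    moreover from this have "j + 2 = i + 5" by simp
    then have "n = fib (i + 5) + fib (i + 2) + p" using n m' by (metis add.assoc)
    ultimately show ?thesis using p by blast
  qed
qed (use A105774_4 A105774_fixed_extend in auto)

lemma A105774_fib_fixed_imp: "A105774 (fib (i + 1)) = int (fib (i + 1)) \<Longrightarrow> i < 2"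
proof (rule ccontr)
  assume "A105774 (fib (i + 1)) = int (fib (i + 1))" "\<not> i < 2"
  moreover from this have "i + 1 = (i - 2) + 3" by simp
  ultimately show False using A105774_fib_less[of "i - 2"] by simp
qed

lemma A105774_fixed_iff:
  assumes "0 < n"
  shows "A105774 n = int n \<longleftrightarrow> n \<in> {1, 4, 7, 11} \<or>
    (\<exists>i p. 0 < p \<and> p < fib (i + 1) \<and> n = fib (i + 5) + fib (i + 2) + p \<and> A105774 p = int p)"
    (is "_ \<longleftrightarrow> _ \<or> (\<exists>i p. 0 < p \<and> p < fib (i + 1) \<and> ?Q i p)")
proof (cases "n = 1")
  case False
  then have n: "2 \<le> n" using assms by simp
  have "(\<exists>i p. 0 < p \<and> p \<le> fib (i + 1) \<and> ?Q i p) \<longleftrightarrow>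
    n \<in> {7, 11} \<or> (\<exists>i p. 0 < p \<and> p < fib (i + 1) \<and> ?Q i p)"
  proof
    assume "\<exists>i p. 0 < p \<and> p \<le> fib (i + 1) \<and> ?Q i p"
    then obtain i p where p: "0 < p" "p \<le> fib (i + 1)" and Q: "?Q i p" by blast
    show "n \<in> {7, 11} \<or> (\<exists>i p. 0 < p \<and> p < fib (i + 1) \<and> ?Q i p)"
    proof (cases "p = fib (i + 1)")
      case True
      then have "i < 2" using A105774_fib_fixed_imp[of i] Q by simp
      then have "i = 0 \<or> i = 1" by linarith
      then show ?thesis using Q True by (auto simp: eval_nat_numeral)
    next
      case False
      then have "p < fib (i + 1)" using p by simp
      then show ?thesis using p Q by blast
    qed
  next
    have "n \<in> {7, 11} \<Longrightarrow> ?Q 0 1 \<or> ?Q 1 1" by (auto simp: eval_nat_numeral)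
    moreover have "(1::nat) \<le> fib (0 + 1)" "(1::nat) \<le> fib (1 + 1)" by simp_all
    moreover assume "n \<in> {7, 11} \<or> (\<exists>i p. 0 < p \<and> p < fib (i + 1) \<and> ?Q i p)"
    ultimately show "\<exists>i p. 0 < p \<and> p \<le> fib (i + 1) \<and> ?Q i p"
      using zero_less_one by (blast intro: less_imp_le)
  qed
  then show ?thesis using A105774_fixed_iff_decomposition[OF n] False by auto
qed simp
section \<open>Zeckendorf representations\<close>

fun zeck_digits :: "nat list \<Rightarrow> bool" where
  "zeck_digits [] = True"
| "zeck_digits [x] = (x \<le> 1)"
| "zeck_digits (x # y # w) = (x \<le> 1 \<and> \<not> (x = 1 \<and> y = 1) \<and> zeck_digits (y # w))"

lemma zeck_digits_Cons_0 [simp]: "zeck_digits (0 # w) = zeck_digits w"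
  by (cases w) auto

lemma zeck_digits_ConsD: "zeck_digits (x # w) \<Longrightarrow> x \<le> 1 \<and> zeck_digits w"
  by (cases w) auto

lemma zeck_digits_Cons_1_Cons: "zeck_digits (1 # y # w) \<longleftrightarrow> y = 0 \<and> zeck_digits w"
  using zeck_digits_ConsD[of y w] by auto

lemma zeck_digits_replicate_0 [simp]: "zeck_digits (replicate k 0 @ w) = zeck_digits w"
  by (induction k) auto

lemma zeck_digits_iff_nth:
  "zeck_digits w \<longleftrightarrow> set w \<subseteq> {0, 1} \<and>
    (\<forall>i. i + 1 < length w \<longrightarrow> \<not> (w ! i = 1 \<and> w ! (i + 1) = 1))"
proof (induction w rule: zeck_digits.induct)
  case (3 x y w)
  have "(\<forall>i. i + 1 < length (x # y # w) \<longrightarrow> \<not> ((x # y # w) ! i = 1 \<and> (x # y # w) ! (i + 1) = 1))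
    \<longleftrightarrow> \<not> (x = 1 \<and> y = 1) \<and>
      (\<forall>i. i + 1 < length (y # w) \<longrightarrow> \<not> ((y # w) ! i = 1 \<and> (y # w) ! (i + 1) = 1))"
    by (auto simp: All_less_Suc2[where n = "Suc (length w)", simplified] less_Suc_eq_0_disj
        simp del: All_less_Suc2)
  then show ?case using 3 by auto
qed auto

lemma is_zeck_rep_iff: "is_zeck_rep w \<longleftrightarrow> w \<noteq> [] \<and> hd w = 1 \<and> zeck_digits w"
  unfolding is_zeck_rep_def zeck_digits_iff_nth by auto

lemma fib_value_Nil [simp]: "fib_value [] = 0"
  by (simp add: fib_value_def)

lemma fib_value_Cons [simp]: "fib_value (x # w) = x * fib (length w + 2) + fib_value w"
  unfolding fib_value_def length_Cons sum.lessThan_Suc_shift by simp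

lemma fib_value_replicate_0 [simp]: "fib_value (replicate k 0 @ w) = fib_value w"
  by (induction k) auto

lemma fib_value_less: "zeck_digits w \<Longrightarrow> fib_value w < fib (length w + 2)"
proof (induction "length w" arbitrary: w rule: less_induct)
  case less
  show ?case
  proof (cases w)
    case (Cons x u)
    then have "x \<le> 1" and u: "zeck_digits u" using less.prems zeck_digits_ConsD by blast+
    then consider "x = 0" | "x = 1" by linarith
    then show ?thesis
    proof cases
      case 1
      then show ?thesis
        using less.hyps[OF _ u] Cons fib_mono[of "length u + 2" "length u + 3"] by simp
    next
      case 2
      show ?thesis
      proof (cases u)
        case Nil
        then show ?thesis using Cons 2 by (simp add: eval_nat_numeral)
      next
        case (Cons y u')
        then have "zeck_digits (1 # y # u')" using less.prems \<open>w = x # u\<close> 2 by simp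
        then have "y = 0" "zeck_digits u'" unfolding zeck_digits_Cons_1_Cons by simp_all
        then show ?thesis using less.hyps[of u'] Cons \<open>w = x # u\<close> 2
          by (simp add: eval_nat_numeral)
      qed
    qed
  qed simp
qed

lemma fib_value_ge: "is_zeck_rep w \<Longrightarrow> fib (length w + 1) \<le> fib_value w"
  unfolding is_zeck_rep_iff by (cases w) auto

lemma zeck_digits_eq_if_fib_value_eq:
  "zeck_digits w \<Longrightarrow> zeck_digits v \<Longrightarrow> length w = length v \<Longrightarrow> fib_value w = fib_value v \<Longrightarrow> w = v"
proof (induction w arbitrary: v)
  case (Cons x w)
  then obtain y u where v: "v = y # u" by (cases v) auto
  have digits: "x \<le> 1" "y \<le> 1" "zeck_digits w" "zeck_digits u"
    using zeck_digits_ConsD[OF Cons.prems(1)] zeck_digits_ConsD[OF Cons.prems(2)[unfolded v]]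
    by blast+
  have len: "length w = length u" using Cons.prems v by simp
  text \<open>A leading \<open>1\<close> outweighs any admissible tail of the same length.\<close>
  have "x = y"
  proof (rule ccontr)
    assume "x \<noteq> y"
    then have "x = 1 \<and> y = 0 \<or> x = 0 \<and> y = 1" using digits(1,2) by linarith
    then show False
      using fib_value_less[OF digits(3)] fib_value_less[OF digits(4)] Cons.prems(4) v len by auto
  qed
  then have "fib_value w = fib_value u" using Cons.prems(4) v len by simp
  then show ?case using Cons.IH[OF digits(3,4) len] \<open>x = y\<close> v by simp
qed simp

lemma zeck_rep_unique:
  assumes "is_zeck_rep w" "is_zeck_rep v" "fib_value w = fib_value v"
  shows "w = v"
proof -
  have bounds: "fib (length u + 1) \<le> fib_value u" "fib_value u < fib (length u + 2)"
    if "is_zeck_rep u" for u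
    using that fib_value_ge fib_value_less is_zeck_rep_iff by blast+
  have "length w = length v"
  proof (rule ccontr)
    assume "length w \<noteq> length v"
    then have "length w + 2 \<le> length v + 1 \<or> length v + 2 \<le> length w + 1" by linarith
    then show False
      using bounds[OF assms(1)] bounds[OF assms(2)] assms(3)
        fib_mono[of "length w + 2" "length v + 1"] fib_mono[of "length v + 2" "length w + 1"]
      by linarith
  qed
  then show ?thesis
    using zeck_digits_eq_if_fib_value_eq assms is_zeck_rep_iff by blast
qed

lemma zeck_digits_exists: "n < fib (t + 2) \<Longrightarrow> \<exists>w. zeck_digits w \<and> length w = t \<and> fib_value w = n"
proof (induction t arbitrary: n rule: fib.induct)
  case 1
  then show ?case by simp
next
  case 2
  then show ?case by (intro exI[of _ "[n]"]) simp
next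
  case (3 t)
  show ?case
  proof (cases "n < fib (Suc t + 2)")
    case True
    then obtain w where "zeck_digits w" "length w = Suc t" "fib_value w = n"
      using "3.IH"(1) by blast
    then show ?thesis by (intro exI[of _ "0 # w"]) simp
  next
    case False
    then have "n - fib (t + 3) < fib (t + 2)"
      using "3.prems" by (simp add: eval_nat_numeral)
    then obtain w where "zeck_digits w" "length w = t" "fib_value w = n - fib (t + 3)"
      using "3.IH"(2) by blast
    then show ?thesis
      using False by (intro exI[of _ "1 # 0 # w"]) (simp add: eval_nat_numeral)
  qed
qed

lemma zeck_digits_strip_zeros:
  "zeck_digits w \<Longrightarrow> 0 < fib_value w \<Longrightarrow> \<exists>k u. w = replicate k 0 @ u \<and> is_zeck_rep u"
proof (induction w)
  case (Cons x w)
  show ?case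
  proof (cases "x = 0")
    case True
    then obtain k u where "w = replicate k 0 @ u" "is_zeck_rep u"
      using Cons zeck_digits_ConsD[OF Cons.prems(1)] by auto
    then show ?thesis using True by (intro exI[of _ "Suc k"] exI[of _ u]) simp
  next
    case False
    then have "x = 1" using zeck_digits_ConsD[OF Cons.prems(1)] by linarith
    then show ?thesis using Cons.prems by (intro exI[of _ 0] exI[of _ "x # w"]) (simp add: is_zeck_rep_iff)
  qed
qed simp

lemma zeck_rep_exists:
  assumes "0 < n"
  shows "\<exists>w. is_zeck_rep w \<and> fib_value w = n"
proof -
  obtain w where "zeck_digits w" "fib_value w = n"
    using zeck_digits_exists[OF less_fib_add_2] by blast
  moreover from this obtain k u where "w = replicate k 0 @ u" "is_zeck_rep u"
    using zeck_digits_strip_zeros assms by blast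
  ultimately show ?thesis by auto
qed

lemma zeck_fib_value [simp]: "is_zeck_rep w \<Longrightarrow> zeck (fib_value w) = w"
  unfolding zeck_def by (rule the_equality) (auto intro: zeck_rep_unique)

lemma
  assumes "0 < n"
  shows is_zeck_rep_zeck: "is_zeck_rep (zeck n)" and fib_value_zeck [simp]: "fib_value (zeck n) = n"
  using zeck_rep_exists[OF assms] zeck_fib_value by auto

lemma length_zeck_less:
  assumes "0 < p" "p < fib (i + 1)"
  shows "length (zeck p) < i"
proof -
  have "fib (length (zeck p) + 1) \<le> p"
    using fib_value_ge[OF is_zeck_rep_zeck[OF assms(1)]] assms(1) by simp
  then show ?thesis using fib_less_fib_imp_less[of "length (zeck p) + 1" "i + 1"] assms(2) by simp
qed

lemma lang21_iff:
  "w \<in> lang21 \<longleftrightarrow> w \<in> {[1], [1,0,1], [1,0,1,0], [1,0,1,0,0]} \<or>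
    (\<exists>k v. 0 < k \<and> v \<in> lang21 \<and> w = [1,0,0,1] @ replicate k 0 @ v)"
proof
  assume "w \<in> lang21"
  then obtain ws s where w: "w = [1] @ concat ws @ s"
    and ws: "\<forall>x \<in> set ws. \<exists>k. x = [0,0,1,0] @ replicate k 0 @ [1]"
    and s: "s \<in> {[], [0,1], [0,1,0], [0,1,0,0]}"
    unfolding lang21_def by blast
  show "w \<in> {[1], [1,0,1], [1,0,1,0], [1,0,1,0,0]} \<or>
    (\<exists>k v. 0 < k \<and> v \<in> lang21 \<and> w = [1,0,0,1] @ replicate k 0 @ v)"
  proof (cases ws)
    case Nil
    then show ?thesis using w s by auto
  next
    case (Cons x ws')
    obtain k where x: "x = [0,0,1,0] @ replicate k 0 @ [1]" using ws Cons by auto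
    have "[1] @ concat ws' @ s \<in> lang21" unfolding lang21_def using ws Cons s by auto
    moreover have "w = [1,0,0,1] @ replicate (Suc k) 0 @ ([1] @ concat ws' @ s)"
      using w Cons x by (simp add: replicate_app_Cons_same)
    ultimately show ?thesis by blast
  qed
next
  assume "w \<in> {[1], [1,0,1], [1,0,1,0], [1,0,1,0,0]} \<or>
    (\<exists>k v. 0 < k \<and> v \<in> lang21 \<and> w = [1,0,0,1] @ replicate k 0 @ v)"
  then show "w \<in> lang21"
  proof
    assume "w \<in> {[1], [1,0,1], [1,0,1,0], [1,0,1,0,0]}"
    then show ?thesis unfolding lang21_def
      by (intro CollectI exI[of _ "[]"] exI[of _ "tl w"]) auto
  next
    assume "\<exists>k v. 0 < k \<and> v \<in> lang21 \<and> w = [1,0,0,1] @ replicate k 0 @ v"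
    then obtain k v where k: "0 < k" and v: "v \<in> lang21" and w: "w = [1,0,0,1] @ replicate k 0 @ v"
      by blast
    obtain ws s where v': "v = [1] @ concat ws @ s"
      and ws: "\<forall>x \<in> set ws. \<exists>k. x = [0,0,1,0] @ replicate k 0 @ [1]"
      and s: "s \<in> {[], [0,1], [0,1,0], [0,1,0,0]}"
      using v unfolding lang21_def by blast
    obtain k' where k': "k = Suc k'" using k by (cases k) auto
    have "w = [1] @ concat (([0,0,1,0] @ replicate k' 0 @ [1]) # ws) @ s"
      using w v' k' by (simp add: replicate_app_Cons_same)
    moreover have "\<forall>x \<in> set (([0,0,1,0] @ replicate k' 0 @ [1]) # ws).
        \<exists>k. x = [0,0,1,0] @ replicate k 0 @ [1]"
      using ws by auto
    ultimately show ?thesis unfolding lang21_def using s by blast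
  qed
qed

lemma is_zeck_rep_1001_replicate:
  assumes "is_zeck_rep v" "0 < k"
  shows "is_zeck_rep ([1,0,0,1] @ replicate k 0 @ v)"
proof -
  obtain k' where "k = Suc k'" using assms(2) by (cases k) auto
  then show ?thesis using assms(1) by (simp add: is_zeck_rep_iff zeck_digits_Cons_1_Cons)
qed

lemma fib_value_1001_replicate:
  "fib_value ([1,0,0,1] @ replicate k 0 @ v) = fib (length v + k + 5) + fib (length v + k + 2) + fib_value v"
proof -
  have "length v + k + 5 = Suc (Suc (Suc (Suc (Suc (k + length v)))))"
    and "length v + k + 2 = Suc (Suc (k + length v))" by simp_all
  then show ?thesis by (simp only:) simp
qed

lemma is_zeck_rep_lang21: "w \<in> lang21 \<Longrightarrow> is_zeck_rep w"
proof (induction "length w" arbitrary: w rule: less_induct)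
  case less
  from lang21_iff[THEN iffD1, OF less.prems] show ?case
  proof
    assume "w \<in> {[1], [1,0,1], [1,0,1,0], [1,0,1,0,0]}"
    then show ?thesis by (auto simp: is_zeck_rep_iff zeck_digits_Cons_1_Cons)
  next
    assume "\<exists>k v. 0 < k \<and> v \<in> lang21 \<and> w = [1,0,0,1] @ replicate k 0 @ v"
    then obtain k v where k: "0 < k" and v: "v \<in> lang21" and w: "w = [1,0,0,1] @ replicate k 0 @ v"
      by blast
    have "is_zeck_rep v" using less.hyps[OF _ v] w by simp
    then show ?thesis using is_zeck_rep_1001_replicate[OF _ k] w by simp
  qed
qed

lemma zeck_eq_1001_replicate:
  assumes "0 < p" "p < fib (i + 1)"
  shows "zeck (fib (i + 5) + fib (i + 2) + p) = [1,0,0,1] @ replicate (i - length (zeck p)) 0 @ zeck p"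
proof -
  have len: "length (zeck p) < i" using length_zeck_less[OF assms] .
  have "fib_value ([1,0,0,1] @ replicate (i - length (zeck p)) 0 @ zeck p) = fib (i + 5) + fib (i + 2) + p"
    unfolding fib_value_1001_replicate using len assms(1) by simp
  moreover have "is_zeck_rep ([1,0,0,1] @ replicate (i - length (zeck p)) 0 @ zeck p)"
    using is_zeck_rep_1001_replicate[OF is_zeck_rep_zeck[OF assms(1)]] len by simp
  ultimately show ?thesis by (metis zeck_fib_value)
qed

lemma zeck_in_exceptions_iff:
  assumes "0 < n"
  shows "zeck n \<in> {[1], [1,0,1], [1,0,1,0], [1,0,1,0,0]} \<longleftrightarrow> n \<in> {1, 4, 7, 11}"
proof
  assume "zeck n \<in> {[1], [1,0,1], [1,0,1,0], [1,0,1,0,0]}"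
  then show "n \<in> {1, 4, 7, 11}"
    using fib_value_zeck[OF assms] by (auto simp: eval_nat_numeral)
next
  assume "n \<in> {1, 4, 7, 11}"
  then have "n = fib_value [1] \<or> n = fib_value [1,0,1] \<or> n = fib_value [1,0,1,0] \<or>
      n = fib_value [1,0,1,0,0]"
    by (auto simp: eval_nat_numeral)
  moreover have "is_zeck_rep [1]" "is_zeck_rep [1,0,1]" "is_zeck_rep [1,0,1,0]" "is_zeck_rep [1,0,1,0,0]"
    by (simp_all add: is_zeck_rep_iff zeck_digits_Cons_1_Cons)
  ultimately show "zeck n \<in> {[1], [1,0,1], [1,0,1,0], [1,0,1,0,0]}"
    by (elim disjE) (simp_all del: fib_value_Cons)
qed

lemma zeck_lang21_iff:
  assumes "0 < n"
  shows "zeck n \<in> lang21 \<longleftrightarrow> n \<in> {1, 4, 7, 11} \<or>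
    (\<exists>i p. 0 < p \<and> p < fib (i + 1) \<and> n = fib (i + 5) + fib (i + 2) + p \<and> zeck p \<in> lang21)"
proof -
  have "(\<exists>k v. 0 < k \<and> v \<in> lang21 \<and> zeck n = [1,0,0,1] @ replicate k 0 @ v) \<longleftrightarrow>
    (\<exists>i p. 0 < p \<and> p < fib (i + 1) \<and> n = fib (i + 5) + fib (i + 2) + p \<and> zeck p \<in> lang21)"
  proof
    assume "\<exists>k v. 0 < k \<and> v \<in> lang21 \<and> zeck n = [1,0,0,1] @ replicate k 0 @ v"
    then obtain k v where k: "0 < k" and v: "v \<in> lang21"
      and w: "zeck n = [1,0,0,1] @ replicate k 0 @ v" by blast
    have rep: "is_zeck_rep v" using is_zeck_rep_lang21[OF v] .
    define p where "p = fib_value v"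
    have "0 < p"
      using fib_value_ge[OF rep] fib_neq_0_nat[of "length v + 1"] unfolding p_def by simp
    moreover have "zeck p = v" using rep unfolding p_def by simp
    moreover have "p < fib (length v + k + 1)"
      using fib_value_less[of v] rep fib_mono[of "length v + 2" "length v + k + 1"] k
      unfolding p_def is_zeck_rep_iff by simp
    moreover have "n = fib (length v + k + 5) + fib (length v + k + 2) + p"
      using fib_value_zeck[OF assms] fib_value_1001_replicate[of k v] w unfolding p_def by simp
    ultimately show "\<exists>i p. 0 < p \<and> p < fib (i + 1) \<and> n = fib (i + 5) + fib (i + 2) + p \<and> zeck p \<in> lang21"
      using v by blast
  next
    assume "\<exists>i p. 0 < p \<and> p < fib (i + 1) \<and> n = fib (i + 5) + fib (i + 2) + p \<and> zeck p \<in> lang21"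
    then obtain i p where p: "0 < p" "p < fib (i + 1)" and lang: "zeck p \<in> lang21"
      and n: "n = fib (i + 5) + fib (i + 2) + p" by blast
    have "0 < i - length (zeck p)" using length_zeck_less[OF p] by simp
    then show "\<exists>k v. 0 < k \<and> v \<in> lang21 \<and> zeck n = [1,0,0,1] @ replicate k 0 @ v"
      using zeck_eq_1001_replicate[OF p] lang n by blast
  qed
  then show ?thesis
    unfolding lang21_iff[of "zeck n"] zeck_in_exceptions_iff[OF assms] by blast
qed

theorem theorem21:
  fixes n :: nat
  assumes "0 < n"
  shows "A105774 n = int n \<longleftrightarrow> zeck n \<in> lang21"
  using assms
proof (induction n rule: less_induct)
  case (less n)
  have "A105774 p = int p \<longleftrightarrow> zeck p \<in> lang21"
    if "0 < p" "n = fib (i + 5) + fib (i + 2) + p" for i p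
  proof (rule less.IH[OF _ that(1)])
    show "p < n" using that(2) fib_neq_0_nat[of "i + 5"] by simp
  qed
  then show ?case
    unfolding A105774_fixed_iff[OF less.prems] zeck_lang21_iff[OF less.prems] by blast
qed

end
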